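(* Let $p$ be a prime, $t\ge r(p)=:r$, and let $f_2,f_3\in\{0,1\}$ satisfy $w_2(p^t)\le f_2$ and $w_3(p^t)\le f_3$. Let $c,d\in\mathbb{Z}$. (i) If $p^{t-r+2}\nmid c$ and $p^{t-r+2}\nmid d$, then $E_{f_2,f_3}(c,d;p^t)\ne0$ implies $(c,p^t)=p^s=(d,p^t)$ for some $s$, and in this case $E_{f_2,f_3}(c,d;p^t)=p^sE_{f_2,f_3}(c/p^s,d/p^s;p^{t-s})$. (ii) If $p^{t-r+2}\mid c$ or $p^{t-r+2}\mid d$, then $E_{f_2,f_3}(c,d;p^t)\ne0$ implies $p^{t-r+1}\mid \gcd(c,d)$, and in this case $E_{f_2,f_3}(c,d;p^t)=p^{t-r+1}E_{f_2,f_3}\big(c/p^{t-r+1},d/p^{t-r+1};p^{r-1}\big)$.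
   Context: For $c,d\in\mathbb{Z}$, $q\in\mathbb{N}$: $E(c,d;q)=\sum^*_{z\bmod q}e\big(\frac{cz^3-dz^2}{q}\big)$ (sum over $z$ coprime to $q$, $e(x)=\exp(2\pi ix)$), and $E_{f_2,f_3}(c,d;q)=E(2^{f_2}c,3^{f_3}d;q)$. Also $w_2(q)=1$ if $4\mid q$ and $0$ otherwise; $w_3(q)=1$ if $9\mid q$ and $0$ otherwise. $r(2)=6$, $r(3)=5$, and $r(p)=2$ for primes $p>3$. *)

theory Defs
  imports "HOL-Analysis.Analysis"
begin

definition expc :: "real \<Rightarrow> complex" where
  "expc x = exp (2 * pi * \<i> * complex_of_real x)"

definition E :: "int \<Rightarrow> int \<Rightarrow> nat \<Rightarrow> complex" where
  "E c d q = (\<Sum>z\<in>{z\<in>{0..<q}. coprime z q}.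
      expc (real_of_int (c * int z ^ 3 - d * int z ^ 2) / real q))"

definition Eff :: "nat \<Rightarrow> nat \<Rightarrow> int \<Rightarrow> int \<Rightarrow> nat \<Rightarrow> complex" where
  "Eff f2 f3 c d q = E (2 ^ f2 * c) (3 ^ f3 * d) q"

definition w2 :: "nat \<Rightarrow> nat" where "w2 q = (if 4 dvd q then 1 else 0)"
definition w3 :: "nat \<Rightarrow> nat" where "w3 q = (if 9 dvd q then 1 else 0)"

definition r :: "nat \<Rightarrow> nat" where
  "r p = (if p = 2 then 6 else if p = 3 then 5 else 2)"

end

theory Submission
  imports Defs "HOL-Number_Theory.Cong"
begin

(* Two facts about E(A,B;q) = sum over units z mod q of e((A z^3 - B z^2)/q) drive the proof:

   - Reduction: if p^s divides both A and B (s < t), the phase only depends on z mod p^(t-s),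
     and each unit mod p^(t-s) has exactly p^s lifts to a unit mod p^t; hence
     E(A,B;p^t) = p^s E(A/p^s, B/p^s; p^(t-s)).
   - Vanishing: for j <= T <= 2j, dilating z by the unit 1 + p^j y shifts the phase by
     y z^2 (3Az - 2B)/p^(T-j) modulo 1; averaging over y < p^(T-j) gives E(A,B;p^T) = 0
     as soon as p^(T-j) never divides 3Az - 2B for units z.

   For A = 2^f2 c, B = 3^f3 d with exactly one of c, d divisible by p, the quantity
   3Az - 2B has p-adic valuation 0 (p > 3) or exactly 1 (p = 2, 3, using f2 resp. f3 = 1),
   so E vanishes at every level T >= r(p).  Writing p^a = (c,p^t), p^b = (d,p^t), and
   reducing by p^min(a,b), one gets: E_{f2,f3}(c,d;p^t) <> 0 forces a = b or
   min(a,b) > t - r(p).  Both parts of the theorem follow from this dichotomy together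
   with the reduction formula. *)

section \<open>The additive character\<close>

lemma expc_add: "expc (x + y) = expc x * expc y"
  unfolding expc_def by (simp add: distrib_left exp_add[symmetric])

lemma expc_of_int: "expc (of_int n) = 1"
  unfolding expc_def using exp_integer_2pi[of "of_int n"]
  by (simp add: mult.commute mult.left_commute)

lemma expc_eq_1_iff: "expc x = 1 \<longleftrightarrow> x \<in> \<int>"
  unfolding expc_def exp_eq_1 by (auto simp: Ints_def)

lemma expc_of_nat_mult: "expc (of_nat y * x) = expc x ^ y"
  unfolding expc_def by (metis exp_of_nat_mult mult.left_commute of_real_mult of_real_of_nat_eq)

lemma expc_mod_cong:
  assumes "k mod int q = k' mod int q" "q > 0"
  shows "expc (of_int k / real q) = expc (of_int k' / real q)"
proof -
  obtain n where n: "k' = k + int q * n"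
    using assms(1) by (metis mod_eqE)
  have "of_int k' / real q = of_int k / real q + of_int n"
    using assms(2) by (simp add: n field_simps)
  then show ?thesis by (simp add: expc_add expc_of_int)
qed

lemma sum_expc_multiples_eq_0:
  assumes "N > 0" "\<not> int N dvd L"
  shows "(\<Sum>y<N. expc (real y * (of_int L / real N))) = 0"
proof -
  let ?w = "expc (of_int L / real N)"
  have "?w \<noteq> 1"
  proof
    assume "?w = 1"
    then obtain n where "of_int L / real N = of_int n" by (auto simp: expc_eq_1_iff Ints_def)
    then have "real_of_int L = real_of_int (int N * n)" using assms(1) by (simp add: field_simps)
    then show False using assms(2) by (simp only: of_int_eq_iff) simp
  qed
  moreover have "?w ^ N = 1"
  proof -
    have "?w ^ N = expc (real N * (of_int L / real N))" by (simp only: expc_of_nat_mult)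
    also have "real N * (of_int L / real N) = of_int L" using assms(1) by simp
    finally show ?thesis by (simp add: expc_of_int)
  qed
  ultimately have "(\<Sum>y<N. ?w ^ y) = 0" by (simp add: sum_gp_strict)
  then show ?thesis by (simp only: expc_of_nat_mult)
qed

definition units_mod :: "nat \<Rightarrow> nat set" where
  "units_mod q = {z\<in>{0..<q}. coprime z q}"

definition eterm :: "int \<Rightarrow> int \<Rightarrow> nat \<Rightarrow> nat \<Rightarrow> complex" where
  "eterm A B q z = expc (real_of_int (A * int z ^ 3 - B * int z ^ 2) / real q)"

lemma E_eq_sum_eterm: "E A B q = (\<Sum>z\<in>units_mod q. eterm A B q z)"
  unfolding E_def units_mod_def eterm_def ..

lemma finite_units_mod [simp]: "finite (units_mod q)"
  unfolding units_mod_def by auto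

lemma cubic_mod:
  fixes x m A B :: int
  shows "(A * x ^ 3 - B * x ^ 2) mod m = (A * (x mod m) ^ 3 - B * (x mod m) ^ 2) mod m"
  by (metis mod_diff_cong mod_mult_right_eq power_mod)

lemma eterm_mod:
  assumes "q > 0"
  shows "eterm A B q (z mod q) = eterm A B q z"
  unfolding eterm_def using assms
  by (intro expc_mod_cong) (simp_all add: of_nat_mod flip: cubic_mod)

lemma eterm_cancel:
  assumes "m > 0"
  shows "eterm (int m * A) (int m * B) (n * m) z = eterm A B n z"
proof -
  have "real_of_int (int m * A * int z ^ 3 - int m * B * int z ^ 2)
      = real m * real_of_int (A * int z ^ 3 - B * int z ^ 2)"
    by (simp add: algebra_simps)
  then show ?thesis unfolding eterm_def using assms by (simp add: mult.commute)
qed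

section \<open>Reduction of the modulus\<close>

text \<open>Every unit modulo \<open>p\<^sup>k\<close> (\<open>k > 0\<close>) has exactly \<open>p\<^sup>s\<close> lifts to a unit modulo \<open>p\<^sup>k\<^sup>+\<^sup>s\<close>.\<close>
lemma sum_units_mod_lift:
  fixes p k s :: nat
  assumes "prime p" "k > 0"
  shows "(\<Sum>z\<in>units_mod (p^k * p^s). h (z mod p^k)) = of_nat (p^s) * (\<Sum>w\<in>units_mod (p^k). h w)"
proof -
  let ?n = "p^k" and ?m = "p^s"
  have pos: "?n > 0" "?m > 0" using assms prime_gt_0_nat by auto
  have cop: "coprime z (?n * ?m) \<longleftrightarrow> coprime (z mod ?n) ?n" for z
    using assms(2) coprime_mod_left_iff[of ?n z] pos(1) by (simp add: power_add[symmetric])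
  have "(\<Sum>z\<in>units_mod (?n * ?m). h (z mod ?n)) = (\<Sum>x\<in>units_mod ?n \<times> {..<?m}. h (fst x))"
  proof (rule sum.reindex_bij_witness[where i = "\<lambda>x. fst x + ?n * snd x" and j = "\<lambda>z. (z mod ?n, z div ?n)"])
    fix x assume x: "x \<in> units_mod ?n \<times> {..<?m}"
    obtain w j where xe: "x = (w, j)" by (cases x)
    have w: "w < ?n" "coprime w ?n" "j < ?m" using x xe by (auto simp: units_mod_def)
    then show "((fst x + ?n * snd x) mod ?n, (fst x + ?n * snd x) div ?n) = x"
      using xe pos by simp
    have "w + ?n * j < ?n * (j + 1)" using w by simp
    also have "\<dots> \<le> ?n * ?m" using w by (intro mult_le_mono2) simp
    finally show "fst x + ?n * snd x \<in> units_mod (?n * ?m)"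
      using w xe cop[of "w + ?n * j"] by (simp add: units_mod_def)
  next
    fix z assume "z \<in> units_mod (?n * ?m)"
    then have z: "z < ?n * ?m" "coprime z (?n * ?m)" by (auto simp: units_mod_def)
    then show "(z mod ?n, z div ?n) \<in> units_mod ?n \<times> {..<?m}"
      using pos cop by (auto simp: units_mod_def less_mult_imp_div_less mult.commute)
  qed auto
  also have "\<dots> = (\<Sum>w\<in>units_mod ?n. \<Sum>j<?m. h w)"
    unfolding sum.cartesian_product by (simp add: case_prod_unfold)
  also have "\<dots> = of_nat ?m * (\<Sum>w\<in>units_mod ?n. h w)"
    by (simp add: sum_distrib_left)
  finally show ?thesis .
qed

lemma E_reduce:
  fixes p s t :: nat and A B :: int
  assumes "prime p" "s < t" "int p ^ s dvd A" "int p ^ s dvd B"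
  shows "E A B (p ^ t) = of_nat (p ^ s) * E (A div int p ^ s) (B div int p ^ s) (p ^ (t - s))"
proof -
  define k where "k = t - s"
  have k: "k > 0" "p ^ t = p ^ k * p ^ s"
    using assms(2) by (simp_all add: k_def power_add[symmetric])
  obtain A' B' where AB: "A = int (p ^ s) * A'" "B = int (p ^ s) * B'"
    using assms(3,4) by (auto elim!: dvdE)
  have pos: "p ^ s > 0" "p ^ k > 0" using assms(1) prime_gt_0_nat by simp_all
  have "E A B (p ^ t) = (\<Sum>z\<in>units_mod (p ^ k * p ^ s). eterm A' B' (p ^ k) (z mod p ^ k))"
    unfolding E_eq_sum_eterm k(2) AB eterm_cancel[OF pos(1)] eterm_mod[OF pos(2)] ..
  also have "\<dots> = of_nat (p ^ s) * E A' B' (p ^ k)"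
    unfolding E_eq_sum_eterm by (rule sum_units_mod_lift[OF assms(1) k(1)])
  finally show ?thesis using pos(1) by (simp add: AB k_def)
qed

lemma Eff_reduce:
  fixes p s t f2 f3 :: nat and c d :: int
  assumes "prime p" "s < t" "int p ^ s dvd c" "int p ^ s dvd d"
  shows "Eff f2 f3 c d (p ^ t) =
           of_nat (p ^ s) * Eff f2 f3 (c div int p ^ s) (d div int p ^ s) (p ^ (t - s))"
  using E_reduce[OF assms(1,2), of "2 ^ f2 * c" "3 ^ f3 * d"] assms(3,4)
  by (simp add: Eff_def div_mult_swap)

section \<open>Vanishing by dilation\<close>

lemma units_mod_dilation_bij:
  assumes "coprime u q"
  shows "bij_betw (\<lambda>z. z * u mod q) (units_mod q) (units_mod q)"
proof -
  have into: "(\<lambda>z. z * u mod q) ` units_mod q \<subseteq> units_mod q"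
    using assms by (auto simp: units_mod_def coprime_mod_left_iff)
  have "inj_on (\<lambda>z. z * u mod q) (units_mod q)"
  proof (rule inj_onI)
    fix a b assume "a \<in> units_mod q" "b \<in> units_mod q" "a * u mod q = b * u mod q"
    then show "a = b"
      using assms cong_mult_rcancel_nat[of u q a b] cong_less_modulus_unique_nat[of a b q]
      by (auto simp: units_mod_def cong_def coprime_commute)
  qed
  with into show ?thesis by (simp add: bij_betw_def endo_inj_surj)
qed

text \<open>If \<open>q = MN\<close> divides \<open>M\<^sup>2\<close>, dilating \<open>z\<close> by \<open>1 + My\<close> shifts the phase by
  \<open>y z\<^sup>2 (3Az - 2B)/N\<close>: the Taylor expansion of the cubic stops after the linear term.\<close>
lemma eterm_dilation:
  assumes "q = M * N" "int q dvd int M ^ 2" "q > 0"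
  shows "eterm A B q (z * (1 + M * y) mod q) =
           eterm A B q z * expc (real y * (of_int (int z ^ 2 * (3 * A * int z - 2 * B)) / real N))"
proof -
  define K where "K = A * int z ^ 3 - B * int z ^ 2"
  define L where "L = int z ^ 2 * (3 * A * int z - 2 * B)"
  obtain R where R: "int M ^ 2 = int q * R" using assms(2) by blast
  have "A * int (z * (1 + M * y)) ^ 3 - B * int (z * (1 + M * y)) ^ 2
      = K + int M * int y * L + int M ^ 2 * (A * int z ^ 3 * (3 * int y ^ 2 + int M * int y ^ 3)
          - B * int z ^ 2 * int y ^ 2)"
    unfolding K_def L_def by (simp add: algebra_simps power2_eq_square power3_eq_cube)
  then have "(A * int (z * (1 + M * y)) ^ 3 - B * int (z * (1 + M * y)) ^ 2) mod int q
      = (K + int M * int y * L) mod int q"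
    by (simp add: R mult.assoc)
  then have "eterm A B q (z * (1 + M * y)) = expc (real_of_int (K + int M * int y * L) / real q)"
    unfolding eterm_def using assms(3) by (rule expc_mod_cong)
  also have "real_of_int (K + int M * int y * L) / real q
      = real_of_int K / real q + real y * (of_int L / real N)"
    using assms(1,3) by (simp add: field_simps)
  finally show ?thesis
    using eterm_mod[OF assms(3)] by (simp add: expc_add eterm_def K_def L_def)
qed

lemma one_plus_multiple_coprime:
  fixes p M y :: nat
  assumes "prime p" "p dvd M"
  shows "coprime (1 + M * y) p"
proof -
  have "p dvd M * y" using assms(2) by simp
  then have "p dvd 1 + M * y \<longleftrightarrow> p dvd 1" by (rule dvd_add_left_iff)
  then have "\<not> p dvd 1 + M * y" using assms(1) not_prime_1 by auto
  then show ?thesis using assms(1) prime_imp_coprime coprime_commute by blast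
qed

lemma E_vanish:
  fixes p j T :: nat and A B :: int
  assumes p: "prime p" and j: "1 \<le> j" "j \<le> T" "T \<le> 2 * j"
    and not_dvd: "\<And>z::nat. coprime z p \<Longrightarrow> \<not> int p ^ (T - j) dvd (3 * A * int z - 2 * B)"
  shows "E A B (p ^ T) = 0"
proof -
  define q M N where "q = p ^ T" and "M = p ^ j" and "N = p ^ (T - j)"
  define L where "L z = int z ^ 2 * (3 * A * int z - 2 * B)" for z :: nat
  have pos: "q > 0" "N > 0" using p prime_gt_0_nat by (simp_all add: q_def N_def)
  have q: "q = M * N" "int q dvd int M ^ 2"
  proof -
    show "q = M * N" using j by (simp add: q_def M_def N_def flip: power_add)
    have "p ^ T dvd p ^ (j * 2)" using j by (simp add: le_imp_power_dvd)
    then show "int q dvd int M ^ 2" by (simp add: q_def M_def power_mult flip: of_nat_power)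
  qed
  have unit_q: "coprime z q \<longleftrightarrow> coprime z p" for z
    using j by (simp add: q_def)
  have twist: "E A B q = (\<Sum>z\<in>units_mod q. eterm A B q z * expc (real y * (of_int (L z) / real N)))"
    for y
  proof -
    have "p dvd M" using j(1) by (simp add: M_def dvd_power)
    then have "coprime (1 + M * y) p" by (rule one_plus_multiple_coprime[OF p])
    then have "bij_betw (\<lambda>z. z * (1 + M * y) mod q) (units_mod q) (units_mod q)"
      using units_mod_dilation_bij unit_q by blast
    then have "E A B q = (\<Sum>z\<in>units_mod q. eterm A B q (z * (1 + M * y) mod q))"
      unfolding E_eq_sum_eterm by (rule sum.reindex_bij_betw[symmetric])
    then show ?thesis unfolding eterm_dilation[OF q pos(1)] L_def .
  qed
  have no_stationary_point: "\<not> int N dvd L z" if "z \<in> units_mod q" for z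
  proof
    assume "int N dvd L z"
    moreover have "coprime z p" using that unit_q by (simp add: units_mod_def)
    then have "coprime (int N) (int z ^ 2)" by (simp add: N_def coprime_commute)
    ultimately have "int N dvd 3 * A * int z - 2 * B"
      unfolding L_def using coprime_dvd_mult_right_iff by blast
    then show False using not_dvd \<open>coprime z p\<close> by (simp add: N_def)
  qed
  have "of_nat N * E A B q
      = (\<Sum>z\<in>units_mod q. eterm A B q z * (\<Sum>y<N. expc (real y * (of_int (L z) / real N))))"
    using twist by (simp add: sum.swap[of _ "{..<N}"] sum_distrib_left)
  also have "\<dots> = 0"
    using no_stationary_point sum_expc_multiples_eq_0[OF pos(2)] by simp
  finally show ?thesis using pos(2) by (simp add: q_def)
qed

section \<open>The derivative \<open>3Az - 2B\<close> for the weighted coefficients\<close>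

lemma prime_dvd_prime_power_eq:
  fixes p q f :: nat
  assumes "prime p" "prime q" "int p dvd int q ^ f"
  shows "p = q"
  using assms by (metis int_dvd_int_iff of_nat_power prime_dvd_power primes_dvd_imp_eq)

lemma prime_dvd_unit_combination:
  fixes P a b c d :: int
  assumes "prime P" "\<not> P dvd a" "\<not> P dvd b" "P dvd a * c - b * d"
  shows "P dvd c \<longleftrightarrow> P dvd d"
proof -
  have "P dvd a * c \<longleftrightarrow> P dvd b * d"
    using assms(4) by (metis dvd_add_right_iff diff_add_cancel)
  then show ?thesis using assms(1-3) by (simp add: prime_dvd_mult_iff)
qed

lemma derivative_factorization:
  fixes p f2 f3 z :: nat and c d :: int
  assumes p: "prime p" and f: "p = 2 \<Longrightarrow> f2 = 1" "p = 3 \<Longrightarrow> f3 = 1" and z: "coprime z p"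
  shows "\<exists>a b. \<not> int p dvd a \<and> \<not> int p dvd b \<and>
           3 * (2 ^ f2 * c) * int z - 2 * (3 ^ f3 * d) =
             int p ^ (if p = 2 \<or> p = 3 then 1 else 0) * (a * c - b * d)"
proof -
  have p_dvd_mult: "int p dvd x * y \<longleftrightarrow> int p dvd x \<or> int p dvd y" for x y
    using p by (simp add: prime_dvd_mult_iff)
  have not_dvd_z: "\<not> int p dvd int z"
    using p z coprime_absorb_right not_prime_unit by auto
  have not_dvd_2: "\<not> int p dvd 2 ^ e" if "p \<noteq> 2" for e
    using prime_dvd_prime_power_eq[of p 2 e] p two_is_prime_nat that by auto
  have "prime (3::nat)" by simp
  then have not_dvd_3: "\<not> int p dvd 3 ^ e" if "p \<noteq> 3" for e
    using prime_dvd_prime_power_eq[of p 3 e] p that by auto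
  consider "p = 2" | "p = 3" | "p \<noteq> 2" "p \<noteq> 3" by blast
  then show ?thesis
  proof cases
    case 1
    then have "p \<noteq> 3" by simp
    then have "\<not> int p dvd 3 * int z" "\<not> int p dvd 3 ^ f3"
      using not_dvd_3[of 1] not_dvd_3[of f3] not_dvd_z p_dvd_mult by auto
    moreover have "3 * (2 ^ f2 * c) * int z - 2 * (3 ^ f3 * d) = int p ^ (if p = 2 \<or> p = 3 then 1 else 0) * (3 * int z * c - 3 ^ f3 * d)"
      using 1 f(1) by (simp add: algebra_simps)
    ultimately show ?thesis by blast
  next
    case 2
    then have "p \<noteq> 2" by simp
    then have "\<not> int p dvd 2 ^ f2 * int z" "\<not> int p dvd 2"
      using not_dvd_2[of 1] not_dvd_2[of f2] not_dvd_z p_dvd_mult by auto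
    moreover have "3 * (2 ^ f2 * c) * int z - 2 * (3 ^ f3 * d) = int p ^ (if p = 2 \<or> p = 3 then 1 else 0) * (2 ^ f2 * int z * c - 2 * d)"
      using 2 f(2) by (simp add: algebra_simps)
    ultimately show ?thesis by blast
  next
    case 3
    then have "\<not> int p dvd 3 * 2 ^ f2 * int z" "\<not> int p dvd 2 * 3 ^ f3"
      using not_dvd_2[of 1] not_dvd_2[of f2] not_dvd_3[of 1] not_dvd_3[of f3] not_dvd_z p_dvd_mult
      by auto
    moreover have "3 * (2 ^ f2 * c) * int z - 2 * (3 ^ f3 * d) = int p ^ (if p = 2 \<or> p = 3 then 1 else 0) * (3 * 2 ^ f2 * int z * c - 2 * 3 ^ f3 * d)"
      using 3 by (simp add: algebra_simps)
    ultimately show ?thesis by blast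
  qed
qed

lemma derivative_not_dvd:
  fixes p f2 f3 z :: nat and c d :: int
  assumes p: "prime p" and f: "p = 2 \<Longrightarrow> f2 = 1" "p = 3 \<Longrightarrow> f3 = 1" and z: "coprime z p"
    and cd: "\<not> (int p dvd c \<longleftrightarrow> int p dvd d)"
  shows "\<not> int p ^ (if p = 2 \<or> p = 3 then 2 else 1) dvd 3 * (2 ^ f2 * c) * int z - 2 * (3 ^ f3 * d)"
proof -
  define \<delta> :: nat where "\<delta> = (if p = 2 \<or> p = 3 then 1 else 0)"
  obtain a b where ab: "\<not> int p dvd a" "\<not> int p dvd b"
    and eq: "3 * (2 ^ f2 * c) * int z - 2 * (3 ^ f3 * d) = int p ^ \<delta> * (a * c - b * d)"
    using derivative_factorization[OF p f z] unfolding \<delta>_def by blast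
  have "\<not> int p dvd a * c - b * d"
    using prime_dvd_unit_combination[of "int p" a b c d] p ab cd by auto
  then have "\<not> int p ^ \<delta> * int p dvd int p ^ \<delta> * (a * c - b * d)"
    using p by (simp add: dvd_mult_cancel_left)
  moreover have "int p ^ (if p = 2 \<or> p = 3 then 2 else 1) = int p ^ \<delta> * int p"
    by (simp add: \<delta>_def)
  ultimately show ?thesis unfolding eq by simp
qed

lemma Eff_vanish:
  fixes p T f2 f3 :: nat and c d :: int
  assumes p: "prime p" and T: "T \<ge> r p" and f: "p = 2 \<Longrightarrow> f2 = 1" "p = 3 \<Longrightarrow> f3 = 1"
    and cd: "\<not> (int p dvd c \<longleftrightarrow> int p dvd d)"
  shows "Eff f2 f3 c d (p ^ T) = 0"
  unfolding Eff_def
proof (rule E_vanish[OF p, of "T - T div 2"])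
  show "1 \<le> T - T div 2" "T - T div 2 \<le> T" "T \<le> 2 * (T - T div 2)"
    using T by (auto simp: r_def split: if_splits)
  fix z :: nat assume "coprime z p"
  moreover have "(if p = 2 \<or> p = 3 then 2 else 1) \<le> T - (T - T div 2)"
    using T by (auto simp: r_def split: if_splits)
  ultimately show "\<not> int p ^ (T - (T - T div 2)) dvd 3 * (2 ^ f2 * c) * int z - 2 * (3 ^ f3 * d)"
    using derivative_not_dvd[OF p f _ cd] power_le_dvd by blast
qed

lemma gcd_prime_power:
  fixes p t :: nat and c :: int
  assumes "prime p"
  shows "\<exists>a\<le>t. gcd c (int p ^ t) = int p ^ a"
proof -
  have "nat (gcd c (int p ^ t)) dvd p ^ t"
    by (metis gcd_dvd2 gcd_ge_0_int nat_dvd_iff nat_int of_nat_power)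
  then obtain a where "a \<le> t" "nat (gcd c (int p ^ t)) = p ^ a"
    using divides_primepow_nat[OF assms] by blast
  then show ?thesis by (metis gcd_ge_0_int int_nat_eq of_nat_power)
qed

lemma prime_power_dvd_iff_le:
  fixes p t a k :: nat and c :: int
  assumes "prime p" "gcd c (int p ^ t) = int p ^ a" "k \<le> t"
  shows "int p ^ k dvd c \<longleftrightarrow> k \<le> a"
proof -
  have "int p ^ k dvd c \<longleftrightarrow> int p ^ k dvd gcd c (int p ^ t)"
    using assms(3) by (simp add: le_imp_power_dvd)
  also have "\<dots> \<longleftrightarrow> k \<le> a"
    unfolding assms(2) using prime_gt_1_nat[OF assms(1)] by (simp add: dvd_power_iff)
  finally show ?thesis .
qed

text \<open>Otherwise reduce by \<open>p\<^sup>m\<close>, \<open>m = min(a,b)\<close>: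
  exactly one of the reduced coefficients is divisible by \<open>p\<close>, and \<open>Eff_vanish\<close> applies.\<close>
lemma Eff_nonzero_valuations:
  fixes p t f2 f3 a b :: nat and c d :: int
  assumes p: "prime p" and t: "t \<ge> r p" and f: "p = 2 \<Longrightarrow> f2 = 1" "p = 3 \<Longrightarrow> f3 = 1"
    and a: "gcd c (int p ^ t) = int p ^ a" and b: "gcd d (int p ^ t) = int p ^ b"
    and nonzero: "Eff f2 f3 c d (p ^ t) \<noteq> 0"
  shows "a = b \<or> t - r p < min a b"
proof (rule ccontr)
  assume "\<not> (a = b \<or> t - r p < min a b)"
  define m where "m = min a b"
  have m: "a \<noteq> b" "m + r p \<le> t" "r p \<ge> 2"
    using \<open>\<not> (a = b \<or> t - r p < min a b)\<close> t by (auto simp: m_def r_def)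
  have dvd_c: "int p ^ k dvd c \<longleftrightarrow> k \<le> a" and dvd_d: "int p ^ k dvd d \<longleftrightarrow> k \<le> b"
    if "k \<le> t" for k using prime_power_dvd_iff_le[OF p a that] prime_power_dvd_iff_le[OF p b that]
    by auto
  have m_dvd: "int p ^ m dvd c" "int p ^ m dvd d"
    using m dvd_c dvd_d by (auto simp: m_def)
  have pm: "int p ^ m \<noteq> 0" using p by simp
  have "int p dvd c div int p ^ m \<longleftrightarrow> int p ^ (m + 1) dvd c"
    "int p dvd d div int p ^ m \<longleftrightarrow> int p ^ (m + 1) dvd d"
    using dvd_div_iff_mult[OF pm m_dvd(1), of "int p"] dvd_div_iff_mult[OF pm m_dvd(2), of "int p"]
    by simp_all
  then have "\<not> (int p dvd c div int p ^ m \<longleftrightarrow> int p dvd d div int p ^ m)"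
    using m dvd_c[of "m + 1"] dvd_d[of "m + 1"] by (auto simp: m_def)
  then have "Eff f2 f3 (c div int p ^ m) (d div int p ^ m) (p ^ (t - m)) = 0"
    using Eff_vanish[OF p _ f] m by simp
  then show False using nonzero Eff_reduce[OF p _ m_dvd] m by simp
qed

lemma w2_forces_f2:
  assumes "t \<ge> r 2" "w2 (2 ^ t) \<le> f2" "f2 \<in> {0, 1}"
  shows "f2 = 1"
proof -
  have "(2::nat) ^ 2 dvd 2 ^ t" using assms(1) by (intro le_imp_power_dvd) (simp add: r_def)
  then show ?thesis using assms(2,3) by (auto simp: w2_def)
qed

lemma w3_forces_f3:
  assumes "t \<ge> r 3" "w3 (3 ^ t) \<le> f3" "f3 \<in> {0, 1}"
  shows "f3 = 1"
proof -
  have "(3::nat) ^ 2 dvd 3 ^ t" using assms(1) by (intro le_imp_power_dvd) (simp add: r_def)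
  then show ?thesis using assms(2,3) by (auto simp: w3_def)
qed

theorem lemma4p4:
  fixes p t f2 f3 :: nat and c d :: int
  assumes "prime p" and "t \<ge> r p"
    and "f2 \<in> {0,1}" and "f3 \<in> {0,1}"
    and "w2 (p ^ t) \<le> f2" and "w3 (p ^ t) \<le> f3"
  shows "(\<not> int p ^ (t - r p + 2) dvd c \<and> \<not> int p ^ (t - r p + 2) dvd d \<longrightarrow>
           Eff f2 f3 c d (p ^ t) \<noteq> 0 \<longrightarrow>
           (\<exists>s. gcd c (int p ^ t) = int p ^ s \<and> gcd d (int p ^ t) = int p ^ s \<and>
                Eff f2 f3 c d (p ^ t) =
                  of_nat (p ^ s) * Eff f2 f3 (c div int p ^ s) (d div int p ^ s) (p ^ (t - s))))
       \<and> (int p ^ (t - r p + 2) dvd c \<or> int p ^ (t - r p + 2) dvd d \<longrightarrow>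
           Eff f2 f3 c d (p ^ t) \<noteq> 0 \<longrightarrow>
           (int p ^ (t - r p + 1) dvd gcd c d \<and>
            Eff f2 f3 c d (p ^ t) =
              of_nat (p ^ (t - r p + 1)) *
              Eff f2 f3 (c div int p ^ (t - r p + 1)) (d div int p ^ (t - r p + 1)) (p ^ (r p - 1))))"
proof -
  note p = assms(1)
  have f: "p = 2 \<Longrightarrow> f2 = 1" "p = 3 \<Longrightarrow> f3 = 1"
    using w2_forces_f2 w3_forces_f3 assms(2-6) by auto
  have t: "t - r p + 1 < t" "t - r p + 2 \<le> t" "t - (t - r p + 1) = r p - 1"
    using assms(2) by (auto simp: r_def)
  obtain a b where a: "gcd c (int p ^ t) = int p ^ a" and b: "gcd d (int p ^ t) = int p ^ b"
    using gcd_prime_power[OF p] by metis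
  have dvd_c: "int p ^ k dvd c \<longleftrightarrow> k \<le> a" and dvd_d: "int p ^ k dvd d \<longleftrightarrow> k \<le> b"
    if "k \<le> t" for k using prime_power_dvd_iff_le[OF p a that] prime_power_dvd_iff_le[OF p b that]
    by auto
  note dichotomy = Eff_nonzero_valuations[OF p assms(2) f a b]
  show ?thesis
  proof (intro conjI impI)
    assume "\<not> int p ^ (t - r p + 2) dvd c \<and> \<not> int p ^ (t - r p + 2) dvd d"
      and "Eff f2 f3 c d (p ^ t) \<noteq> 0"
    then have "a = b" "a < t" using dichotomy dvd_c[OF t(2)] dvd_d[OF t(2)] t(1) by auto
    then show "\<exists>s. gcd c (int p ^ t) = int p ^ s \<and> gcd d (int p ^ t) = int p ^ s \<and>
                Eff f2 f3 c d (p ^ t) =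
                  of_nat (p ^ s) * Eff f2 f3 (c div int p ^ s) (d div int p ^ s) (p ^ (t - s))"
      using a b dvd_c dvd_d Eff_reduce[OF p] by auto
  next
    assume "int p ^ (t - r p + 2) dvd c \<or> int p ^ (t - r p + 2) dvd d"
      and "Eff f2 f3 c d (p ^ t) \<noteq> 0"
    then have "int p ^ (t - r p + 1) dvd c" "int p ^ (t - r p + 1) dvd d"
      using dichotomy dvd_c[OF t(2)] dvd_d[OF t(2)] dvd_c[OF less_imp_le[OF t(1)]]
        dvd_d[OF less_imp_le[OF t(1)]] by auto
    then show "int p ^ (t - r p + 1) dvd gcd c d"
      and "Eff f2 f3 c d (p ^ t) = of_nat (p ^ (t - r p + 1)) *
              Eff f2 f3 (c div int p ^ (t - r p + 1)) (d div int p ^ (t - r p + 1)) (p ^ (r p - 1))"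
      using Eff_reduce[OF p t(1)] unfolding t(3) by auto
  qed
qed

end
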